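(* With the notation of the context, for all fixed frequencies, $$|S^{\rm bad}_{kk_2}|\lesssim(N_1\wedge N_3)^{1-\frac\alpha2},\qquad |S^{\rm bad}_{k_1k_3}|\lesssim(N\wedge N_2)^{1-\frac\alpha2};$$ consequently $|S_{kk_2}|\lesssim(N_1\wedge N_3)^{1-\frac\alpha2}$ and $|S_{k_1k_3}|\lesssim(N\wedge N_2)^{1-\frac\alpha2}$.
   Context: Fix $\alpha\in(1,2)$, dyadic numbers $1\le N_1,N_2,N_3\le N$, a real number $m$ and a constant $C_0>0$. Let $S$ be the set of $(k,k_1,k_2,k_3)\in\mathbb Z^4$ with $k=k_1-k_2+k_3$, $k_2\notin\{k_1,k_3\}$, $\big||k_1|^\alpha-|k_2|^\alpha+|k_3|^\alpha-|k|^\alpha-m\big|\le C_0$, $|k|\le N$ and $|k_j|\le N_j$ for $j=1,2,3$. Let $S_{k_1k_3}=\{(k,k_2):(k,k_1,k_2,k_3)\in S\}$ and $S_{kk_2}=\{(k_1,k_3):(k,k_1,k_2,k_3)\in S\}$. Fix a small absolute constant $c\in(0,1)$ and set $S^{\rm bad}_{k_1k_3}=\{(k,k_2)\in S_{k_1k_3}:|2k-(k_1+k_3)|<c|k_1+k_3|\}$, $S^{\rm good}_{k_1k_3}=S_{k_1k_3}\setminus S^{\rm bad}_{k_1k_3}$, $S^{\rm bad}_{kk_2}=\{(k_1,k_3)\in S_{kk_2}:|2k_1-(k+k_2)|<c|k+k_2|\}$, $S^{\rm good}_{kk_2}=S_{kk_2}\setminus S^{\rm bad}_{kk_2}$. $|A|$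 is cardinality, $a\wedge b=\min(a,b)$. $A\lesssim B$ means $A\le CB$ with $C$ depending only on $\alpha$, $c$ and $C_0$. *)

theory Defs
  imports Complex_Main
begin

definition dyadic :: "real \<Rightarrow> bool" where
  "dyadic x \<longleftrightarrow> (\<exists>n::nat. x = 2 ^ n)"

definition Sset :: "real \<Rightarrow> real \<Rightarrow> real \<Rightarrow> real \<Rightarrow> real \<Rightarrow> real \<Rightarrow> real
    \<Rightarrow> (int \<times> int \<times> int \<times> int) set" where
  "Sset \<alpha> N N1 N2 N3 m C0 = {(k, k1, k2, k3).
      k = k1 - k2 + k3 \<and> k2 \<noteq> k1 \<and> k2 \<noteq> k3 \<and>
      \<bar>\<bar>real_of_int k1\<bar> powr \<alpha> - \<bar>real_of_int k2\<bar> powr \<alpha> + \<bar>real_of_int k3\<bar> powr \<alpha>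
        - \<bar>real_of_int k\<bar> powr \<alpha> - m\<bar> \<le> C0 \<and>
      \<bar>real_of_int k\<bar> \<le> N \<and> \<bar>real_of_int k1\<bar> \<le> N1 \<and>
      \<bar>real_of_int k2\<bar> \<le> N2 \<and> \<bar>real_of_int k3\<bar> \<le> N3}"

definition S_k1k3 :: "real \<Rightarrow> real \<Rightarrow> real \<Rightarrow> real \<Rightarrow> real \<Rightarrow> real \<Rightarrow> real
    \<Rightarrow> int \<Rightarrow> int \<Rightarrow> (int \<times> int) set" where
  "S_k1k3 \<alpha> N N1 N2 N3 m C0 k1 k3 = {(k, k2). (k, k1, k2, k3) \<in> Sset \<alpha> N N1 N2 N3 m C0}"

definition S_kk2 :: "real \<Rightarrow> real \<Rightarrow> real \<Rightarrow> real \<Rightarrow> real \<Rightarrow> real \<Rightarrow> real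
    \<Rightarrow> int \<Rightarrow> int \<Rightarrow> (int \<times> int) set" where
  "S_kk2 \<alpha> N N1 N2 N3 m C0 k k2 = {(k1, k3). (k, k1, k2, k3) \<in> Sset \<alpha> N N1 N2 N3 m C0}"

definition S_k1k3_bad :: "real \<Rightarrow> real \<Rightarrow> real \<Rightarrow> real \<Rightarrow> real \<Rightarrow> real \<Rightarrow> real \<Rightarrow> real
    \<Rightarrow> int \<Rightarrow> int \<Rightarrow> (int \<times> int) set" where
  "S_k1k3_bad c \<alpha> N N1 N2 N3 m C0 k1 k3 = {(k, k2) \<in> S_k1k3 \<alpha> N N1 N2 N3 m C0 k1 k3.
      real_of_int \<bar>2 * k - (k1 + k3)\<bar> < c * real_of_int \<bar>k1 + k3\<bar>}"

definition S_kk2_bad :: "real \<Rightarrow> real \<Rightarrow> real \<Rightarrow> real \<Rightarrow> real \<Rightarrow> real \<Rightarrow> real \<Rightarrow> real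
    \<Rightarrow> int \<Rightarrow> int \<Rightarrow> (int \<times> int) set" where
  "S_kk2_bad c \<alpha> N N1 N2 N3 m C0 k k2 = {(k1, k3) \<in> S_kk2 \<alpha> N N1 N2 N3 m C0 k k2.
      real_of_int \<bar>2 * k1 - (k + k2)\<bar> < c * real_of_int \<bar>k + k2\<bar>}"

end

theory Submission
  imports Defs "HOL-Analysis.Analysis"
begin

text \<open>
  For fixed \<open>k, k2\<close> the pairs \<open>(k1, k3)\<close> of \<open>S_kk2\<close> satisfy \<open>k1 + k3 = s\<close>, \<open>s = k + k2\<close>, so they
  are determined by \<open>x = k1\<close>, which lies in a near-level set \<open>\<bar>g x - A\<bar> \<le> C0\<close> of
  \<open>g x = \<bar>x\<bar> powr \<alpha> + \<bar>s - x\<bar> powr \<alpha>\<close> with \<open>\<bar>x\<bar> \<le> N1\<close> and \<open>\<bar>s - x\<bar> \<le> N3\<close>; likewise for \<open>S_k1k3\<close>.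
  On \<open>[-R, R]\<close> the function \<open>\<bar>x\<bar> powr \<alpha>\<close> is uniformly convex with modulus
  \<open>\<alpha>(\<alpha> - 1) R powr (\<alpha> - 2)\<close>, so comparing \<open>g\<close> with its chord at three points \<open>a < b < c\<close> of the
  near-level set gives \<open>\<alpha>(\<alpha> - 1) M powr (\<alpha> - 2) (b - a)(c - b) \<le> 4 C0\<close> with \<open>M = min N1 N3\<close>.
  For the smallest, the median and the largest of \<open>n\<close> such integers both gaps are at least
  \<open>(n - 1)/2\<close>, whence \<open>n \<le> C M powr (1 - \<alpha>/2)\<close>.
\<close>

lemma has_real_derivative_abs_powr:
  fixes \<alpha> x :: real
  assumes "1 < \<alpha>"
  shows "((\<lambda>x. \<bar>x\<bar> powr \<alpha>) has_real_derivative \<alpha> * sgn x * \<bar>x\<bar> powr (\<alpha> - 1)) (at x)"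
proof (cases x "0::real" rule: linorder_cases)
  case less
  have "((\<lambda>x. (-x) powr \<alpha>) has_real_derivative - (\<alpha> * (-x) powr (\<alpha> - 1))) (at x)"
    using less by (auto intro!: derivative_eq_intros)
  then have "((\<lambda>x. \<bar>x\<bar> powr \<alpha>) has_real_derivative - (\<alpha> * (-x) powr (\<alpha> - 1))) (at x)"
    by (rule has_field_derivative_transform_within_open[where S="{..<0}"]) (use less in auto)
  then show ?thesis using less by simp
next
  case greater
  have "((\<lambda>x. x powr \<alpha>) has_real_derivative \<alpha> * x powr (\<alpha> - 1)) (at x)"
    using greater by (rule has_real_derivative_powr)
  then have "((\<lambda>x. \<bar>x\<bar> powr \<alpha>) has_real_derivative \<alpha> * x powr (\<alpha> - 1)) (at x)"
    by (rule has_field_derivative_transform_within_open[where S="{0<..}"]) (use greater in auto)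
  then show ?thesis using greater by simp
next
  case equal
  have "((\<lambda>h. \<bar>h\<bar> powr (\<alpha> - 1)) \<longlongrightarrow> 0) (at (0::real))"
  proof -
    have "((\<lambda>h. \<bar>h\<bar> powr (\<alpha> - 1)) \<longlongrightarrow> \<bar>0\<bar> powr (\<alpha> - 1)) (at (0::real))"
      using assms by (intro tendsto_intros) auto
    then show ?thesis by simp
  qed
  then have "((\<lambda>h. \<bar>(\<bar>h\<bar> powr \<alpha> - \<bar>0\<bar> powr \<alpha>) / h\<bar>) \<longlongrightarrow> 0) (at (0::real))"
  proof (rule tendsto_cong[THEN iffD1, rotated])
    show "\<forall>\<^sub>F h in at 0. \<bar>h\<bar> powr (\<alpha> - 1) = \<bar>(\<bar>h\<bar> powr \<alpha> - \<bar>0\<bar> powr \<alpha>) / h\<bar>"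
      by (auto simp: eventually_at_filter powr_diff abs_divide)
  qed
  then have "((\<lambda>x. \<bar>x\<bar> powr \<alpha>) has_real_derivative 0) (at 0)"
    unfolding DERIV_def by (subst tendsto_rabs_zero_iff[symmetric]) (simp add: abs_divide)
  then show ?thesis using equal by simp
qed

lemma powr_minus_linear_mono:
  fixes \<alpha> R x y :: real
  assumes "1 < \<alpha>" "\<alpha> < 2" "0 \<le> x" "x \<le> y" "y \<le> R"
  shows "\<alpha> * x powr (\<alpha> - 1) - \<alpha> * (\<alpha> - 1) * R powr (\<alpha> - 2) * x
           \<le> \<alpha> * y powr (\<alpha> - 1) - \<alpha> * (\<alpha> - 1) * R powr (\<alpha> - 2) * y"
proof (rule DERIV_nonneg_imp_increasing_open[OF assms(4)])
  fix t assume t: "x < t" "t < y"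
  have "R powr (\<alpha> - 2) \<le> t powr (\<alpha> - 2)"
    using t assms by (intro powr_mono2') auto
  then have "0 \<le> \<alpha> * (\<alpha> - 1) * (t powr (\<alpha> - 2) - R powr (\<alpha> - 2))"
    using assms by simp
  then have "0 \<le> \<alpha> * ((\<alpha> - 1) * t powr (\<alpha> - 1 - 1)) - \<alpha> * (\<alpha> - 1) * R powr (\<alpha> - 2)"
    by (simp add: algebra_simps)
  moreover have "DERIV (\<lambda>t. \<alpha> * t powr (\<alpha> - 1) - \<alpha> * (\<alpha> - 1) * R powr (\<alpha> - 2) * t) t
      :> \<alpha> * ((\<alpha> - 1) * t powr (\<alpha> - 1 - 1)) - \<alpha> * (\<alpha> - 1) * R powr (\<alpha> - 2)"
    using t assms by (auto intro!: derivative_eq_intros)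
  ultimately show "\<exists>d. DERIV (\<lambda>t. \<alpha> * t powr (\<alpha> - 1) - \<alpha> * (\<alpha> - 1) * R powr (\<alpha> - 2) * t) t :> d
      \<and> 0 \<le> d"
    by blast
next
  show "continuous_on {x..y} (\<lambda>t. \<alpha> * t powr (\<alpha> - 1) - \<alpha> * (\<alpha> - 1) * R powr (\<alpha> - 2) * t)"
    using assms by (intro continuous_intros continuous_on_powr') auto
qed

lemma convex_on_abs_powr_minus_square:
  fixes \<alpha> R :: real
  assumes "1 < \<alpha>" "\<alpha> < 2"
  shows "convex_on {-R..R} (\<lambda>x. \<bar>x\<bar> powr \<alpha> - \<alpha> * (\<alpha> - 1) * R powr (\<alpha> - 2) / 2 * x\<^sup>2)"
proof -
  define \<kappa> where "\<kappa> = \<alpha> * (\<alpha> - 1) * R powr (\<alpha> - 2)"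
  define q where "q t = \<alpha> * t powr (\<alpha> - 1) - \<kappa> * t" for t
  have q_mono: "q x \<le> q y" if "0 \<le> x" "x \<le> y" "y \<le> R" for x y
    using powr_minus_linear_mono[OF assms that] unfolding q_def \<kappa>_def .
  have q_nonneg: "0 \<le> q x" if "0 \<le> x" "x \<le> R" for x
    using q_mono[of 0 x] that by (simp add: q_def)
  show ?thesis
    unfolding \<kappa>_def[symmetric]
  proof (rule convex_on_realI[where f'="\<lambda>x. sgn x * q \<bar>x\<bar>"])
    fix x :: real
    have "((\<lambda>x. \<bar>x\<bar> powr \<alpha> - \<kappa> / 2 * x\<^sup>2) has_real_derivative
            \<alpha> * sgn x * \<bar>x\<bar> powr (\<alpha> - 1) - \<kappa> / 2 * (2 * x)) (at x)"
      by (intro DERIV_diff has_real_derivative_abs_powr[OF assms(1)])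
        (auto intro!: derivative_eq_intros)
    moreover have "\<alpha> * sgn x * \<bar>x\<bar> powr (\<alpha> - 1) - \<kappa> / 2 * (2 * x) = sgn x * q \<bar>x\<bar>"
      by (cases x "0::real" rule: linorder_cases) (auto simp: q_def)
    ultimately show "((\<lambda>x. \<bar>x\<bar> powr \<alpha> - \<kappa> / 2 * x\<^sup>2) has_real_derivative sgn x * q \<bar>x\<bar>) (at x)"
      by simp
  next
    fix x y :: real assume "x \<in> {-R..R}" "y \<in> {-R..R}" "x \<le> y"
    then show "sgn x * q \<bar>x\<bar> \<le> sgn y * q \<bar>y\<bar>"
      using q_mono[of x y] q_mono[of "-y" "-x"] q_nonneg[of "-x"] q_nonneg[of y]
      by (cases x "0::real" rule: linorder_cases; cases y "0::real" rule: linorder_cases) auto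
  qed simp
qed

lemma convex_on_minus_square_chord:
  fixes f :: "real \<Rightarrow> real" and \<kappa> a b c :: real
  assumes "convex_on {a..c} (\<lambda>x. f x - \<kappa> / 2 * x\<^sup>2)" "a < b" "b < c"
  shows "(c - a) * f b + \<kappa> / 2 * (b - a) * (c - b) * (c - a) \<le> (c - b) * f a + (b - a) * f c"
proof -
  define h where "h x = f x - \<kappa> / 2 * x\<^sup>2" for x
  have "h b \<le> (h c - h a) / (c - a) * (b - a) + h a"
    using convex_onD_Icc'[OF assms(1)[folded h_def], of b] assms(2,3) by simp
  then have "(c - a) * h b \<le> (h c - h a) * (b - a) + (c - a) * h a"
    using assms(2,3) by (simp add: field_simps)
  moreover have "(c - b) * f a + (b - a) * f c - ((c - a) * f b + \<kappa> / 2 * (b - a) * (c - b) * (c - a))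
      = (h c - h a) * (b - a) + (c - a) * h a - (c - a) * h b"
    unfolding h_def by (simp add: field_simps power2_eq_square)
  ultimately show ?thesis by linarith
qed

lemma abs_powr_chord:
  fixes \<alpha> R a b c :: real
  assumes "1 < \<alpha>" "\<alpha> < 2" "a < b" "b < c" "\<bar>a\<bar> \<le> R" "\<bar>c\<bar> \<le> R"
  shows "(c - a) * \<bar>b\<bar> powr \<alpha> + \<alpha> * (\<alpha> - 1) * R powr (\<alpha> - 2) / 2 * (b - a) * (c - b) * (c - a)
           \<le> (c - b) * \<bar>a\<bar> powr \<alpha> + (b - a) * \<bar>c\<bar> powr \<alpha>"
proof (rule convex_on_minus_square_chord[OF _ assms(3,4)])
  show "convex_on {a..c} (\<lambda>x. \<bar>x\<bar> powr \<alpha> - \<alpha> * (\<alpha> - 1) * R powr (\<alpha> - 2) / 2 * x\<^sup>2)"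
    using assms by (intro convex_on_subset[OF convex_on_abs_powr_minus_square[OF assms(1,2)]]) auto
qed

lemma near_level_three_points_gap:
  fixes \<alpha> P Q s A C0 a b c :: real
  defines "g x \<equiv> \<bar>x\<bar> powr \<alpha> + \<bar>s - x\<bar> powr \<alpha>"
  assumes \<alpha>: "1 < \<alpha>" "\<alpha> < 2" and abc: "a < b" "b < c"
    and range: "\<bar>a\<bar> \<le> P" "\<bar>c\<bar> \<le> P" "\<bar>s - a\<bar> \<le> Q" "\<bar>s - c\<bar> \<le> Q"
    and level: "\<bar>g a - A\<bar> \<le> C0" "\<bar>g b - A\<bar> \<le> C0" "\<bar>g c - A\<bar> \<le> C0"
  shows "\<alpha> * (\<alpha> - 1) * (min P Q) powr (\<alpha> - 2) * (b - a) * (c - b) \<le> 4 * C0"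
proof -
  define kP where "kP = \<alpha> * (\<alpha> - 1) * P powr (\<alpha> - 2)"
  define kQ where "kQ = \<alpha> * (\<alpha> - 1) * Q powr (\<alpha> - 2)"
  define X where "X = (b - a) * (c - b) * (c - a)"
  have chord_P: "(c - a) * \<bar>b\<bar> powr \<alpha> + kP / 2 * X \<le> (c - b) * \<bar>a\<bar> powr \<alpha> + (b - a) * \<bar>c\<bar> powr \<alpha>"
    using abs_powr_chord[OF \<alpha> abc range(1,2)] unfolding kP_def X_def by (simp add: mult.assoc)
  have chord_Q: "(c - a) * \<bar>s - b\<bar> powr \<alpha> + kQ / 2 * X
      \<le> (c - b) * \<bar>s - a\<bar> powr \<alpha> + (b - a) * \<bar>s - c\<bar> powr \<alpha>"
  proof -
    have "s - c < s - b" "s - b < s - a" using abc by simp_all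
    note chord = abs_powr_chord[OF \<alpha> this range(4,3)]
    have "(s - a) - (s - c) = c - a" "(s - b) - (s - c) = c - b" "(s - a) - (s - b) = b - a"
      by simp_all
    then show ?thesis
      using chord unfolding kQ_def X_def by (simp only:) (simp add: mult_ac)
  qed
  define K where "K = (kP + kQ) / 2"
  have "(c - a) * g b + K * X \<le> (c - b) * g a + (b - a) * g c"
  proof -
    have "(c - a) * g b = (c - a) * \<bar>b\<bar> powr \<alpha> + (c - a) * \<bar>s - b\<bar> powr \<alpha>"
      "(c - b) * g a = (c - b) * \<bar>a\<bar> powr \<alpha> + (c - b) * \<bar>s - a\<bar> powr \<alpha>"
      "(b - a) * g c = (b - a) * \<bar>c\<bar> powr \<alpha> + (b - a) * \<bar>s - c\<bar> powr \<alpha>"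
      "K * X = kP / 2 * X + kQ / 2 * X"
      unfolding g_def K_def by (simp_all add: distrib_left add_divide_distrib distrib_right)
    then show ?thesis using chord_P chord_Q by linarith
  qed
  moreover have "(c - b) * g a \<le> (c - b) * (A + C0)" "(b - a) * g c \<le> (b - a) * (A + C0)"
      "(c - a) * (A - C0) \<le> (c - a) * g b"
    using abc level by (auto intro!: mult_left_mono simp: abs_le_iff)
  moreover have "(c - b) * (A + C0) + (b - a) * (A + C0) = (c - a) * (A - C0) + (2 * C0) * (c - a)"
    by (simp add: algebra_simps)
  moreover have "K * X = (K * ((b - a) * (c - b))) * (c - a)"
    unfolding X_def by (simp add: mult.assoc)
  ultimately have "(K * ((b - a) * (c - b))) * (c - a) \<le> (2 * C0) * (c - a)"
    by linarith
  then have "K * ((b - a) * (c - b)) \<le> 2 * C0"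
    using abc by simp
  moreover have "\<alpha> * (\<alpha> - 1) * (min P Q) powr (\<alpha> - 2) * ((b - a) * (c - b)) \<le> 2 * K * ((b - a) * (c - b))"
    using \<alpha> abc unfolding K_def kP_def kQ_def by (intro mult_right_mono) (auto simp: min_def)
  ultimately show ?thesis
    by (simp add: mult.assoc)
qed

lemma sorted_wrt_less_nth_diff_ge:
  fixes xs :: "int list"
  assumes "sorted_wrt (<) xs" "i \<le> j" "j < length xs"
  shows "int (j - i) \<le> xs ! j - xs ! i"
  using assms(2,3)
proof (induction j)
  case (Suc j)
  show ?case
  proof (cases "i = Suc j")
    case False
    then have "int (j - i) \<le> xs ! j - xs ! i" "xs ! j < xs ! Suc j"
      using Suc assms(1) by (auto simp: sorted_wrt_iff_nth_less)
    then show ?thesis using False Suc.prems by linarith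
  qed simp
qed simp

lemma card_le_of_triple_gap:
  fixes X :: "int set" and K D :: real
  assumes "finite X" "0 < K" "0 \<le> D"
    and gap: "\<And>a b c. a \<in> X \<Longrightarrow> b \<in> X \<Longrightarrow> c \<in> X \<Longrightarrow> a < b \<Longrightarrow> b < c \<Longrightarrow>
              K * (b - a) * (c - b) \<le> D"
  shows "real (card X) \<le> 2 * sqrt (D / K) + 2"
proof (cases "card X \<le> 2")
  case True
  moreover have "0 \<le> sqrt (D / K)" using assms(2,3) by simp
  ultimately show ?thesis by linarith
next
  case False
  define n where "n = card X"
  define xs where "xs = sorted_list_of_set X"
  define t where "t = (n - 1) div 2"
  have sorted: "sorted_wrt (<) xs" and len: "length xs = n" and set: "set xs = X"
    using assms(1) unfolding xs_def n_def by (auto simp: strict_sorted_list_of_set)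
  have t: "1 \<le> t" "t < n - 1" "t \<le> n - 1 - t" "n \<le> 2 * t + 2"
    using False unfolding t_def n_def by auto
  define a b c where "a = xs ! 0" and "b = xs ! t" and "c = xs ! (n - 1)"
  have "real t \<le> real_of_int (b - a)" "real t \<le> real_of_int (c - b)"
    using sorted_wrt_less_nth_diff_ge[OF sorted, of 0 t] sorted_wrt_less_nth_diff_ge[OF sorted, of t "n - 1"]
      t len unfolding a_def b_def c_def by linarith+
  then have "K * real t * real t \<le> K * (b - a) * (c - b)"
    using assms(2) by (intro mult_mono mult_left_mono) auto
  moreover have "a \<in> X" "b \<in> X" "c \<in> X"
    using t len unfolding set[symmetric] a_def b_def c_def by auto
  then have "K * (b - a) * (c - b) \<le> D"
    using gap t len sorted unfolding a_def b_def c_def by (auto simp: sorted_wrt_iff_nth_less)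
  ultimately have "K * real t * real t \<le> D" by linarith
  then have "real t \<le> sqrt (D / K)"
    using assms(2) by (intro real_le_rsqrt) (simp add: field_simps power2_eq_square mult.commute)
  moreover have "real n \<le> 2 * real t + 2" using t by linarith
  ultimately show ?thesis unfolding n_def by linarith
qed

lemma sqrt_divide_powr_scale:
  fixes \<alpha> D K M :: real
  assumes "0 < M"
  shows "sqrt (D / (K * M powr (\<alpha> - 2))) = sqrt (D / K) * M powr (1 - \<alpha> / 2)"
proof -
  have "1 / M powr (\<alpha> - 2) = M powr (2 - \<alpha>)"
    using assms by (simp flip: powr_minus_divide)
  then have "D / (K * M powr (\<alpha> - 2)) = D / K * M powr (2 - \<alpha>)"
    by (metis divide_divide_eq_left times_divide_eq_right mult_1_right)
  moreover have "sqrt (M powr (2 - \<alpha>)) = M powr (1 - \<alpha> / 2)"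
    using assms by (simp add: powr_half_sqrt[symmetric] powr_powr field_simps)
  ultimately show ?thesis by (metis real_sqrt_mult)
qed

definition near_level_count_const :: "real \<Rightarrow> real \<Rightarrow> real" where
  "near_level_count_const \<alpha> C0 = 2 * sqrt (4 * C0 / (\<alpha> * (\<alpha> - 1))) + 2"

lemma card_near_level_set:
  fixes \<alpha> C0 P Q A :: real and s :: int and X :: "int set"
  assumes \<alpha>: "1 < \<alpha>" "\<alpha> < 2" and "0 < C0" "1 \<le> P" "1 \<le> Q"
    and X: "\<And>x. x \<in> X \<Longrightarrow> \<bar>real_of_int x\<bar> \<le> P \<and> \<bar>real_of_int (s - x)\<bar> \<le> Q \<and>
          \<bar>\<bar>real_of_int x\<bar> powr \<alpha> + \<bar>real_of_int (s - x)\<bar> powr \<alpha> - A\<bar> \<le> C0"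
  shows "finite X"
    and "real (card X) \<le> near_level_count_const \<alpha> C0 * (min P Q) powr (1 - \<alpha> / 2)"
proof -
  have "X \<subseteq> {-\<lceil>P\<rceil>..\<lceil>P\<rceil>}"
  proof
    fix x assume "x \<in> X"
    then have "\<bar>real_of_int x\<bar> \<le> P" using X by blast
    then show "x \<in> {-\<lceil>P\<rceil>..\<lceil>P\<rceil>}" by (simp add: abs_le_iff) linarith
  qed
  then show fin: "finite X" using finite_subset by blast
  define M where "M = min P Q"
  have M: "1 \<le> M" using assms unfolding M_def by simp
  define K where "K = \<alpha> * (\<alpha> - 1) * M powr (\<alpha> - 2)"
  have "real (card X) \<le> 2 * sqrt (4 * C0 / K) + 2"
  proof (rule card_le_of_triple_gap[OF fin])
    show "0 < K" "0 \<le> 4 * C0" using assms M unfolding K_def by auto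
  next
    fix a b c assume "a \<in> X" "b \<in> X" "c \<in> X" "a < b" "b < c"
    then show "K * real_of_int (b - a) * real_of_int (c - b) \<le> 4 * C0"
      using X[of a] X[of b] X[of c] near_level_three_points_gap[OF \<alpha>, of a b c P "real_of_int s" Q A C0]
      unfolding K_def M_def by simp
  qed
  also have "\<dots> \<le> near_level_count_const \<alpha> C0 * M powr (1 - \<alpha> / 2)"
  proof -
    have "sqrt (4 * C0 / K) = sqrt (4 * C0 / (\<alpha> * (\<alpha> - 1))) * M powr (1 - \<alpha> / 2)"
      unfolding K_def using M by (intro sqrt_divide_powr_scale) auto
    moreover have "1 \<le> M powr (1 - \<alpha> / 2)" using M \<alpha> by (intro ge_one_powr_ge_zero) auto
    ultimately show ?thesis
      unfolding near_level_count_const_def by (simp add: distrib_right)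
  qed
  finally show "real (card X) \<le> near_level_count_const \<alpha> C0 * (min P Q) powr (1 - \<alpha> / 2)"
    unfolding M_def .
qed

lemma card_near_level_pairs:
  fixes \<alpha> C0 P Q A :: real and s :: int and S :: "(int \<times> int) set"
  assumes "1 < \<alpha>" "\<alpha> < 2" "0 < C0" "1 \<le> P" "1 \<le> Q"
    and S: "\<And>x y. (x, y) \<in> S \<Longrightarrow> x + y = s \<and> \<bar>real_of_int x\<bar> \<le> P \<and> \<bar>real_of_int y\<bar> \<le> Q \<and>
          \<bar>\<bar>real_of_int x\<bar> powr \<alpha> + \<bar>real_of_int y\<bar> powr \<alpha> - A\<bar> \<le> C0"
  shows "finite S"
    and "real (card S) \<le> near_level_count_const \<alpha> C0 * (min P Q) powr (1 - \<alpha> / 2)"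
proof -
  have inj: "inj_on fst S"
    by (rule inj_onI) (metis S add_left_cancel prod.collapse)
  have "y = s - x" if "(x, y) \<in> S" for x y
    using S[OF that] by simp
  then have "\<bar>real_of_int x\<bar> \<le> P \<and> \<bar>real_of_int (s - x)\<bar> \<le> Q \<and>
      \<bar>\<bar>real_of_int x\<bar> powr \<alpha> + \<bar>real_of_int (s - x)\<bar> powr \<alpha> - A\<bar> \<le> C0" if "x \<in> fst ` S" for x
    using that S by force
  note bound = card_near_level_set[OF assms(1-5), of "fst ` S", OF this]
  show "finite S" using bound(1) finite_image_iff[OF inj] by blast
  show "real (card S) \<le> near_level_count_const \<alpha> C0 * (min P Q) powr (1 - \<alpha> / 2)"
    using bound(2) card_image[OF inj] by simp
qed

lemma S_kk2_near_level:
  assumes "(k1, k3) \<in> S_kk2 \<alpha> N N1 N2 N3 m C0 k k2"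
  shows "k1 + k3 = k + k2 \<and> \<bar>real_of_int k1\<bar> \<le> N1 \<and> \<bar>real_of_int k3\<bar> \<le> N3 \<and>
    \<bar>\<bar>real_of_int k1\<bar> powr \<alpha> + \<bar>real_of_int k3\<bar> powr \<alpha>
      - (\<bar>real_of_int k\<bar> powr \<alpha> + \<bar>real_of_int k2\<bar> powr \<alpha> + m)\<bar> \<le> C0"
  using assms unfolding S_kk2_def Sset_def by (auto simp: algebra_simps)

lemma S_k1k3_near_level:
  assumes "(k, k2) \<in> S_k1k3 \<alpha> N N1 N2 N3 m C0 k1 k3"
  shows "k + k2 = k1 + k3 \<and> \<bar>real_of_int k\<bar> \<le> N \<and> \<bar>real_of_int k2\<bar> \<le> N2 \<and>
    \<bar>\<bar>real_of_int k\<bar> powr \<alpha> + \<bar>real_of_int k2\<bar> powr \<alpha>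
      - (\<bar>real_of_int k1\<bar> powr \<alpha> + \<bar>real_of_int k3\<bar> powr \<alpha> - m)\<bar> \<le> C0"
proof -
  have "\<bar>\<bar>real_of_int k\<bar> powr \<alpha> + \<bar>real_of_int k2\<bar> powr \<alpha>
      - (\<bar>real_of_int k1\<bar> powr \<alpha> + \<bar>real_of_int k3\<bar> powr \<alpha> - m)\<bar>
    = \<bar>\<bar>real_of_int k1\<bar> powr \<alpha> - \<bar>real_of_int k2\<bar> powr \<alpha> + \<bar>real_of_int k3\<bar> powr \<alpha>
      - \<bar>real_of_int k\<bar> powr \<alpha> - m\<bar>"
    by (simp add: abs_minus_commute algebra_simps)
  then show ?thesis
    using assms unfolding S_k1k3_def Sset_def by auto
qed

theorem corollary2p8:
  fixes \<alpha> c C0 :: real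
  assumes "1 < \<alpha>" "\<alpha> < 2" "0 < c" "c < 1" "0 < C0"
  shows "\<exists>C>0. \<forall>N N1 N2 N3 m k k1 k2 k3.
           dyadic N \<and> dyadic N1 \<and> dyadic N2 \<and> dyadic N3 \<and>
           1 \<le> N1 \<and> N1 \<le> N \<and> 1 \<le> N2 \<and> N2 \<le> N \<and> 1 \<le> N3 \<and> N3 \<le> N \<longrightarrow>
             real (card (S_kk2_bad c \<alpha> N N1 N2 N3 m C0 k k2))
               \<le> C * (min N1 N3) powr (1 - \<alpha> / 2) \<and>
             real (card (S_k1k3_bad c \<alpha> N N1 N2 N3 m C0 k1 k3))
               \<le> C * (min N N2) powr (1 - \<alpha> / 2) \<and>
             real (card (S_kk2 \<alpha> N N1 N2 N3 m C0 k k2))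
               \<le> C * (min N1 N3) powr (1 - \<alpha> / 2) \<and>
             real (card (S_k1k3 \<alpha> N N1 N2 N3 m C0 k1 k3))
               \<le> C * (min N N2) powr (1 - \<alpha> / 2)"
proof (intro exI[of _ "near_level_count_const \<alpha> C0"] conjI allI impI)
  show "0 < near_level_count_const \<alpha> C0"
    unfolding near_level_count_const_def using assms by (simp add: add_nonneg_pos)
  fix N N1 N2 N3 m :: real and k k1 k2 k3 :: int
  assume "dyadic N \<and> dyadic N1 \<and> dyadic N2 \<and> dyadic N3 \<and>
           1 \<le> N1 \<and> N1 \<le> N \<and> 1 \<le> N2 \<and> N2 \<le> N \<and> 1 \<le> N3 \<and> N3 \<le> N"
  then have N: "1 \<le> N1" "1 \<le> N3" "1 \<le> N" "1 \<le> N2" by auto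
  note kk2 = card_near_level_pairs[OF assms(1,2,5) N(1,2)
      S_kk2_near_level[of _ _ \<alpha> N N1 N2 N3 m C0 k k2]]
  note k1k3 = card_near_level_pairs[OF assms(1,2,5) N(3,4)
      S_k1k3_near_level[of _ _ \<alpha> N N1 N2 N3 m C0 k1 k3]]
  have "card (S_kk2_bad c \<alpha> N N1 N2 N3 m C0 k k2) \<le> card (S_kk2 \<alpha> N N1 N2 N3 m C0 k k2)"
    "card (S_k1k3_bad c \<alpha> N N1 N2 N3 m C0 k1 k3) \<le> card (S_k1k3 \<alpha> N N1 N2 N3 m C0 k1 k3)"
    using kk2(1) k1k3(1) unfolding S_kk2_bad_def S_k1k3_bad_def by (auto intro!: card_mono)
  then show "real (card (S_kk2_bad c \<alpha> N N1 N2 N3 m C0 k k2))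
      \<le> near_level_count_const \<alpha> C0 * (min N1 N3) powr (1 - \<alpha> / 2)"
    "real (card (S_k1k3_bad c \<alpha> N N1 N2 N3 m C0 k1 k3))
      \<le> near_level_count_const \<alpha> C0 * (min N N2) powr (1 - \<alpha> / 2)"
    "real (card (S_kk2 \<alpha> N N1 N2 N3 m C0 k k2))
      \<le> near_level_count_const \<alpha> C0 * (min N1 N3) powr (1 - \<alpha> / 2)"
    "real (card (S_k1k3 \<alpha> N N1 N2 N3 m C0 k1 k3))
      \<le> near_level_count_const \<alpha> C0 * (min N N2) powr (1 - \<alpha> / 2)"
    using kk2(2) k1k3(2) by (smt (verit) of_nat_le_iff)+
qed

end
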